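(* Let $n\geq2$, $0\leq\lambda\leq n-1$, $\mu>0$, $\alpha=1-\frac{\lambda}{n-1}$, and for $0<r<1$ set $$\varphi(r)=\begin{cases}\exp\bigl(-(n+1)\mu\log^\alpha(\tfrac1r)\bigr), &\alpha>0,\\ 2^{-n}\mu^n\log^{-n(1+\mu)}(\tfrac1r), &\alpha=0,\end{cases}\qquad \psi(r)=\begin{cases}\exp\bigl(-\mu\log^\alpha(\tfrac1r)\bigr), &\alpha>0,\\ \log^{-\mu}(\tfrac1r), &\alpha=0.\end{cases}$$ Then there exists $R_0=R_0(\alpha,\mu)>0$ such that $\psi(2r)-\psi(r)\geq(\varphi(r))^{1/n}$ for all $0<r<R_0$. *)

theory Defs
  imports Complex_Main
begin

definition phi :: "nat \<Rightarrow> real \<Rightarrow> real \<Rightarrow> real \<Rightarrow> real" where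
  "phi n \<alpha> \<mu> r =
     (if \<alpha> > 0 then exp (- ((real n + 1) * \<mu> * (ln (1 / r) powr \<alpha>)))
      else (2 powr (- real n)) * \<mu> ^ n * (ln (1 / r) powr (- (real n * (1 + \<mu>)))))"

definition psi :: "real \<Rightarrow> real \<Rightarrow> real \<Rightarrow> real" where
  "psi \<alpha> \<mu> r =
     (if \<alpha> > 0 then exp (- (\<mu> * (ln (1 / r) powr \<alpha>)))
      else ln (1 / r) powr (- \<mu>))"

end

theory Submission
  imports Defs "HOL-Analysis.Convex" "HOL-Real_Asymp.Real_Asymp"
begin

text \<open>With \<open>L = ln (1/r)\<close> we have \<open>ln (1/(2r)) = L - ln 2\<close>, so \<open>\<psi>(2r) - \<psi>(r)\<close> is a
  difference of a function of \<open>L\<close> over a step of fixed length \<open>ln 2\<close>. By concavity of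
  \<open>L powr \<alpha>\<close> (resp. convexity of \<open>L powr -\<mu>\<close>) it is at least of order \<open>\<psi>(r) L powr \<alpha> / L\<close>
  (resp. \<open>\<mu> L powr (-\<mu>-1)\<close>). For \<open>\<alpha> > 0\<close> the \<open>n\<close>-th root of \<open>\<phi>(r)\<close> carries an extra
  factor \<open>exp (-\<mu> L powr \<alpha> / n)\<close>, which decays faster than any power of \<open>L\<close>; for \<open>\<alpha> = 0\<close>
  the root of \<open>\<phi>(r)\<close> is exactly \<open>\<mu>/2 \<cdot> L powr (-\<mu>-1)\<close> and \<open>ln 2 \<ge> 1/2\<close> suffices.\<close>

lemma ln_two_ge_half: "ln (2::real) \<ge> 1/2"
proof -
  have "exp (1/2::real) ^ 2 = exp 1" by (simp flip: exp_of_nat_mult)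
  also have "\<dots> < 2 ^ 2" using exp_le by simp
  finally have "exp (1/2::real) < 2"
    using power_less_imp_less_base by fastforce
  thus ?thesis by (subst ln_ge_iff) auto
qed

lemma powr_diff_ge_concave:
  fixes L c a :: real
  assumes "0 < c" "c < L" "0 < a" "a \<le> 1"
  shows "L powr a - (L - c) powr a \<ge> a * c * L powr a / L"
proof -
  have L: "L > 0" using assms by simp
  have "(L - c) powr a * L powr (1 - a) \<le> a * (L - c) + (1 - a) * L"
    using Youngs_inequality_0[of a "1 - a" "L - c" L] assms by simp
  also have "\<dots> = L - a * c" by (simp add: algebra_simps)
  finally have "(L - c) powr a * (L / L powr a) \<le> L - a * c"
    using L by (simp add: powr_diff)
  hence "(L - c) powr a * L \<le> (L - a * c) * L powr a"
    using L by (simp add: field_simps)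
  thus ?thesis using L by (simp add: field_simps)
qed

lemma powr_neg_diff_ge_convex:
  fixes L c m :: real
  assumes "0 < c" "c < L" "m > 0"
  shows "(L - c) powr (- m) - L powr (- m) \<ge> m * c / L * L powr (- m)"
proof -
  have L: "L > 0" and Lc: "L - c > 0" using assms by simp_all
  have "ln ((L - c) / L) \<le> (L - c) / L - 1" using L Lc by (intro ln_le_minus_one) simp
  also have "\<dots> = - c / L" using L by (simp add: field_simps)
  finally have ln_ge: "ln (L / (L - c)) \<ge> c / L"
    using L Lc by (simp add: ln_div)
  have "1 + m * (c / L) \<le> 1 + m * ln (L / (L - c))"
    using mult_left_mono[OF ln_ge, of m] assms(3) by simp
  also have "\<dots> \<le> exp (m * ln (L / (L - c)))" by (rule exp_ge_add_one_self)
  also have "\<dots> = (L / (L - c)) powr m" using L Lc by (simp add: powr_def)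
  finally have "L powr (- m) * (1 + m * (c / L)) \<le> L powr (- m) * (L / (L - c)) powr m"
    by (intro mult_left_mono) auto
  also have "\<dots> = (L - c) powr (- m)"
    using L Lc by (simp add: powr_divide powr_minus field_simps)
  finally show ?thesis by (simp add: algebra_simps)
qed

lemma exp_neg_diff_ge: "exp (- B) - exp (- A) \<ge> exp (- A) * (A - B :: real)"
proof -
  have "exp (- A) * (1 + (A - B)) \<le> exp (- A) * exp (A - B)"
    by (intro mult_left_mono exp_ge_add_one_self) simp
  thus ?thesis by (simp add: algebra_simps flip: exp_add)
qed

lemma phi_root_pos_exponent:
  assumes "\<alpha> > 0" "n > 0"
  shows "phi n \<alpha> \<mu> r powr (1 / real n) =
           exp (- (\<mu> * ln (1/r) powr \<alpha>)) * exp (- (\<mu> * ln (1/r) powr \<alpha>) / real n)"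
  using assms by (simp add: phi_def powr_def field_simps flip: exp_add)

lemma phi_root_zero_exponent:
  assumes "\<mu> > 0" "n > 0" "ln (1/r) > 0"
  shows "phi n 0 \<mu> r powr (1 / real n) = \<mu> / 2 / ln (1/r) * ln (1/r) powr (- \<mu>)"
proof -
  define L where "L = ln (1/r)"
  have L: "L > 0" using assms(3) by (simp add: L_def)
  have "phi n 0 \<mu> r powr (1 / real n) =
      (2 powr (- real n)) powr (1 / real n) * (\<mu> ^ n) powr (1 / real n)
      * (L powr (- (real n * (1 + \<mu>)))) powr (1 / real n)"
    using assms(1) L by (simp add: phi_def L_def powr_mult)
  also have "\<dots> = 2 powr (-1) * \<mu> * L powr (- 1 - \<mu>)"
    using assms(1,2) L by (simp add: powr_powr powr_realpow [symmetric] algebra_simps)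
  also have "\<dots> = \<mu> / 2 / L * L powr (- \<mu>)"
  proof -
    have "L powr (- 1 - \<mu>) = L powr (- \<mu> - 1)"
      by (rule arg_cong[where f = "\<lambda>x. L powr x"]) simp
    also have "\<dots> = L powr (- \<mu>) / L" using L by (simp add: powr_diff)
    finally have "L powr (- 1 - \<mu>) = L powr (- \<mu>) / L" .
    thus ?thesis by (simp add: powr_minus_divide)
  qed
  finally show ?thesis by (simp add: L_def)
qed

lemma exp_powr_gap_eventually:
  fixes \<alpha> \<mu> c :: real and n :: nat
  assumes "0 < \<alpha>" "\<alpha> \<le> 1" "\<mu> > 0" "n > 0" "c > 0"
  shows "\<forall>\<^sub>F L in at_top. exp (- (\<mu> * (L - c) powr \<alpha>)) - exp (- (\<mu> * L powr \<alpha>))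
           \<ge> exp (- (\<mu> * L powr \<alpha>)) * exp (- (\<mu> * L powr \<alpha>) / real n)"
proof -
  have "\<forall>\<^sub>F L in at_top. exp (- (\<mu> * L powr \<alpha>) / real n) < \<mu> * (\<alpha> * c * L powr \<alpha> / L)"
    using assms by real_asymp
  moreover have "\<forall>\<^sub>F L in at_top. L > c" by real_asymp
  ultimately show ?thesis
  proof eventually_elim
    case (elim L)
    have "\<mu> * (\<alpha> * c * L powr \<alpha> / L) \<le> \<mu> * (L powr \<alpha> - (L - c) powr \<alpha>)"
      using powr_diff_ge_concave[of c L \<alpha>] assms elim(2) by (intro mult_left_mono) auto
    with elim(1) have "exp (- (\<mu> * L powr \<alpha>) / real n) \<le> \<mu> * L powr \<alpha> - \<mu> * (L - c) powr \<alpha>"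
      by (simp add: algebra_simps)
    hence "exp (- (\<mu> * L powr \<alpha>)) * exp (- (\<mu> * L powr \<alpha>) / real n)
        \<le> exp (- (\<mu> * L powr \<alpha>)) * (\<mu> * L powr \<alpha> - \<mu> * (L - c) powr \<alpha>)"
      by (intro mult_left_mono) auto
    also have "\<dots> \<le> exp (- (\<mu> * (L - c) powr \<alpha>)) - exp (- (\<mu> * L powr \<alpha>))"
      by (rule exp_neg_diff_ge)
    finally show ?case .
  qed
qed

lemma psi_gap_ge_phi_root_eventually:
  fixes \<alpha> \<mu> :: real and n :: nat
  assumes "0 \<le> \<alpha>" "\<alpha> \<le> 1" "\<mu> > 0" "n > 0"
  shows "\<forall>\<^sub>F r in at_right 0. psi \<alpha> \<mu> (2 * r) - psi \<alpha> \<mu> r \<ge> phi n \<alpha> \<mu> r powr (1 / real n)"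
proof -
  define c :: real where "c = ln 2"
  have c: "c > 0" by (simp add: c_def)
  have ln_at_right: "filterlim (\<lambda>r::real. ln (1/r)) at_top (at_right 0)" by real_asymp
  have ev_gap: "\<forall>\<^sub>F r in at_right 0. \<alpha> > 0 \<longrightarrow>
      exp (- (\<mu> * (ln (1/r) - c) powr \<alpha>)) - exp (- (\<mu> * ln (1/r) powr \<alpha>))
        \<ge> exp (- (\<mu> * ln (1/r) powr \<alpha>)) * exp (- (\<mu> * ln (1/r) powr \<alpha>) / real n)"
  proof (cases "\<alpha> > 0")
    case True
    show ?thesis
      using eventually_compose_filterlim[OF exp_powr_gap_eventually[OF True assms(2-4) c] ln_at_right]
      by simp
  qed simp
  have ev_large: "\<forall>\<^sub>F r in at_right 0. ln (1/r) > c"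
    using eventually_compose_filterlim[OF eventually_gt_at_top ln_at_right] .
  have ev_pos: "\<forall>\<^sub>F r::real in at_right 0. r > 0" by (simp add: eventually_at_right_less)
  show ?thesis
    using ev_gap ev_large ev_pos
  proof eventually_elim
    case (elim r)
    define L where "L = ln (1/r)"
    have L: "L > c" "L > 0" using elim(2) c by (simp_all add: L_def)
    have ln_2r: "ln (1 / (2 * r)) = L - c"
      using elim(3) by (simp add: L_def c_def ln_div ln_mult)
    show ?case
    proof (cases "\<alpha> > 0")
      case True
      then show ?thesis
        using elim(1) ln_2r phi_root_pos_exponent[OF True assms(4)]
        by (simp add: psi_def L_def)
    next
      case False
      hence "\<alpha> = 0" using assms(1) by simp
      have "phi n \<alpha> \<mu> r powr (1 / real n) = \<mu> / 2 / L * L powr (- \<mu>)"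
        using phi_root_zero_exponent[OF assms(3,4)] L \<open>\<alpha> = 0\<close> by (simp add: L_def)
      also have "\<dots> \<le> \<mu> * c / L * L powr (- \<mu>)"
        using ln_two_ge_half L assms(3)
        by (intro mult_right_mono divide_right_mono) (auto simp: c_def)
      also have "\<dots> \<le> (L - c) powr (- \<mu>) - L powr (- \<mu>)"
        using powr_neg_diff_ge_convex[OF c L(1) assms(3)] .
      also have "\<dots> = psi \<alpha> \<mu> (2 * r) - psi \<alpha> \<mu> r"
        using \<open>\<alpha> = 0\<close> ln_2r by (simp add: psi_def L_def)
      finally show ?thesis .
    qed
  qed
qed

theorem lemma5p2:
  fixes n :: nat and lam \<mu> \<alpha> :: real
  assumes "n \<ge> 2"
    and "0 \<le> lam" and "lam \<le> real n - 1"
    and "\<mu> > 0"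
    and "\<alpha> = 1 - lam / (real n - 1)"
  shows "\<exists>R0 > 0. \<forall>r. 0 < r \<and> r < R0 \<longrightarrow>
           psi \<alpha> \<mu> (2 * r) - psi \<alpha> \<mu> r \<ge> (phi n \<alpha> \<mu> r) powr (1 / real n)"
proof -
  have n1: "real n - 1 > 0" using assms(1) by simp
  have "0 \<le> lam / (real n - 1)" "lam / (real n - 1) \<le> 1"
    using n1 assms(2,3) by (simp_all add: divide_le_eq_1)
  hence "0 \<le> \<alpha>" "\<alpha> \<le> 1" using assms(5) by linarith+
  moreover have "n > 0" using assms(1) by simp
  ultimately show ?thesis
    using psi_gap_ge_phi_root_eventually[OF _ _ assms(4)]
    unfolding eventually_at_right_field by blast
qed

end
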